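(* Suppose $(Y,X)$ is a random vector in $\mathbb{R}^{d+1}$ with continuous marginals and a Gaussian copula having a non-singular covariance matrix. Then $\lambda^{(\mathrm{opt})}(Y,X)=0$.
   Context: $F_\xi$ is the CDF of $\xi$ and $F_\xi^{\leftarrow}(p)=\inf\{y:F_\xi(y)\ge p\}$. For $p\in(0,1)$, $\mathcal{C}_p(X)$ is the class of Borel functions $g$ with $\mathbb{P}[g(X)>F_{g(X)}^{\leftarrow}(p)]=1-p$. The optimal extremal precision is \[ \lambda^{(\mathrm{opt})}(Y,X)=\limsup_{p\uparrow1}\sup_{g\in\mathcal{C}_p(X)}\mathbb{P}\big(Y>F_Y^{\leftarrow}(p)\mid g(X)>F_{g(X)}^{\leftarrow}(p)\big). \] *)

theory Defs
  imports "HOL-Probability.Probability"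
begin

definition cdf_rv :: "'a measure \<Rightarrow> ('a \<Rightarrow> real) \<Rightarrow> real \<Rightarrow> real" where
  "cdf_rv M \<xi> t = measure M {\<omega> \<in> space M. \<xi> \<omega> \<le> t}"

definition gen_inv :: "(real \<Rightarrow> real) \<Rightarrow> real \<Rightarrow> real" where
  "gen_inv F p = Inf {y. p \<le> F y}"

definition std_normal_cdf :: "real \<Rightarrow> real" where
  "std_normal_cdf x = measure (density lborel std_normal_density) {..x}"

definition correlation_matrix :: "real ^'n ^'n \<Rightarrow> bool" where
  "correlation_matrix R \<longleftrightarrow> transpose R = R \<and> (\<forall>v. 0 \<le> v \<bullet> (R *v v)) \<and> (\<forall>i. R $ i $ i = 1)"

definition mvn_density :: "real ^'n ^'n \<Rightarrow> real ^'n \<Rightarrow> real" where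
  "mvn_density R w = exp (- (w \<bullet> (matrix_inv R *v w)) / 2) / sqrt ((2 * pi) ^ CARD('n) * det R)"

definition gaussian_copula :: "real ^'n ^'n \<Rightarrow> real ^'n \<Rightarrow> real" where
  "gaussian_copula R u = measure (density lborel (mvn_density R)) {w. \<forall>i. std_normal_cdf (w $ i) \<le> u $ i}"

text \<open>(Y,X) has the Gaussian copula with correlation matrix R; the coordinate None is Y,
  the coordinate Some i is the i-th component of X.\<close>
definition has_gaussian_copula ::
  "'a measure \<Rightarrow> ('a \<Rightarrow> real) \<Rightarrow> ('a \<Rightarrow> real ^'d) \<Rightarrow> real ^('d option) ^('d option) \<Rightarrow> bool" where
  "has_gaussian_copula M Y X R \<longleftrightarrow>
     (\<forall>y x. measure M {\<omega> \<in> space M. Y \<omega> \<le> y \<and> (\<forall>i. X \<omega> $ i \<le> x $ i)} =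
        gaussian_copula R (\<chi> j. case j of None \<Rightarrow> cdf_rv M Y y
                                        | Some i \<Rightarrow> cdf_rv M (\<lambda>\<omega>. X \<omega> $ i) (x $ i)))"

definition class_C :: "'a measure \<Rightarrow> ('a \<Rightarrow> 'b::topological_space) \<Rightarrow> real \<Rightarrow> ('b \<Rightarrow> real) set" where
  "class_C M X p = {g. g \<in> borel_measurable borel \<and>
     measure M {\<omega> \<in> space M. g (X \<omega>) > gen_inv (cdf_rv M (\<lambda>\<omega>. g (X \<omega>))) p} = 1 - p}"

definition cond_prob :: "'a measure \<Rightarrow> 'a set \<Rightarrow> 'a set \<Rightarrow> real" where
  "cond_prob M A B = measure M (A \<inter> B) / measure M B"

definition lambda_opt :: "'a measure \<Rightarrow> ('a \<Rightarrow> real) \<Rightarrow> ('a \<Rightarrow> 'b::topological_space) \<Rightarrow> ereal" where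
  "lambda_opt M Y X = Limsup (at_left (1::real)) (\<lambda>p.
     SUP g \<in> class_C M X p. ereal (cond_prob M
        {\<omega> \<in> space M. Y \<omega> > gen_inv (cdf_rv M Y) p}
        {\<omega> \<in> space M. g (X \<omega>) > gen_inv (cdf_rv M (\<lambda>\<omega>. g (X \<omega>))) p}))"

end

theory Submission
  imports Defs "HOL-Real_Asymp.Real_Asymp"
begin

text \<open>Write \<open>Z = (Y, X)\<close>. By the copula hypothesis \<open>Z\<close> has the law of \<open>T(W)\<close>, where
  \<open>W \<sim> N(0, R)\<close> and \<open>T\<close> applies \<open>F\<^sub>j\<^sup>\<leftarrow> \<circ> \<Phi>\<close> in each coordinate \<open>j\<close>. For \<open>p = \<Phi>(t)\<close>
  the event \<open>Y > F\<^sub>Y\<^sup>\<leftarrow>(p)\<close> forces \<open>W\<^sub>Y > t\<close>, whereas the conditioning event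
  \<open>g(X) > F\<^sub>g\<^sub>(\<^sub>X\<^sub>)\<^sup>\<leftarrow>(p)\<close> is a set \<open>S\<close> of values of \<open>W\<close> that is invariant under shifts of the
  coordinate \<open>W\<^sub>Y\<close>. Exponential tilting of the Gaussian gives
  \<open>P(W\<^sub>Y > t, W \<in> S) \<le> exp(-b t\<^sup>2/32) P(S) + exp(-t\<^sup>2/2 - b t\<^sup>2/4)\<close> with
  \<open>b = 1 / (R\<^sup>-\<^sup>1)\<^sub>Y\<^sub>Y > 0\<close>. Since \<open>P(S) = 1 - p \<ge> \<phi>(t + 1)\<close>, the conditional probability is
  \<open>O(exp(-b t\<^sup>2/32) + exp(t - b t\<^sup>2/4))\<close> uniformly in \<open>g\<close>, and this vanishes as \<open>p \<rightarrow> 1\<close>.\<close>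

section \<open>The standard normal distribution function\<close>

abbreviation std_normal :: "real measure" where
  "std_normal \<equiv> density lborel std_normal_density"

interpretation std_normal: real_distribution std_normal
  using prob_space_normal_density[of 1 0]
  by (simp add: real_distribution_def real_distribution_axioms_def)

lemma std_normal_cdf_eq_cdf: "std_normal_cdf = cdf std_normal"
  by (simp add: std_normal_cdf_def cdf_def fun_eq_iff)

lemma std_normal_cdf_mono: "x \<le> y \<Longrightarrow> std_normal_cdf x \<le> std_normal_cdf y"
  unfolding std_normal_cdf_eq_cdf by (rule std_normal.cdf_nondecreasing)

lemma mono_std_normal_cdf: "mono std_normal_cdf"
  by (rule monoI) (rule std_normal_cdf_mono)

lemma isCont_std_normal_cdf: "isCont std_normal_cdf x"
proof -
  have "emeasure std_normal {x} = 0"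
    by (subst emeasure_density) (auto simp: nn_integral_indicator_singleton)
  then show ?thesis
    unfolding std_normal_cdf_eq_cdf by (simp add: std_normal.isCont_cdf measure_def)
qed

lemma std_normal_cdf_at_top: "(std_normal_cdf \<longlongrightarrow> 1) at_top"
  unfolding std_normal_cdf_eq_cdf by (rule std_normal.cdf_lim_at_top_prob)

lemma std_normal_cdf_at_bot: "(std_normal_cdf \<longlongrightarrow> 0) at_bot"
  unfolding std_normal_cdf_eq_cdf by (rule std_normal.cdf_lim_at_bot)

lemma std_normal_cdf_increment_ge:
  assumes "x \<le> y"
  shows "(y - x) * std_normal_density (max \<bar>x\<bar> \<bar>y\<bar>) \<le> std_normal_cdf y - std_normal_cdf x"
proof (cases "x = y")
  case False
  let ?c = "std_normal_density (max \<bar>x\<bar> \<bar>y\<bar>)"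
  have density_ge:
    "ennreal ?c * indicator {x<..y} z \<le> ennreal (std_normal_density z) * indicator {x<..y} z" for z
  proof (cases "z \<in> {x<..y}")
    case True
    then have "\<bar>z\<bar>\<^sup>2 \<le> (max \<bar>x\<bar> \<bar>y\<bar>)\<^sup>2"
      by (intro power_mono) auto
    then show ?thesis
      using True by (simp add: std_normal_density_def divide_right_mono ennreal_leI)
  qed simp
  have "ennreal ((y - x) * ?c) = (\<integral>\<^sup>+z. ennreal ?c * indicator {x<..y} z \<partial>lborel)"
    using assms
    by (subst nn_integral_cmult_indicator) (auto simp: ennreal_mult' mult.commute normal_density_nonneg)
  also have "\<dots> \<le> (\<integral>\<^sup>+z. ennreal (std_normal_density z) * indicator {x<..y} z \<partial>lborel)"
    by (intro nn_integral_mono density_ge)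
  also have "\<dots> = emeasure std_normal {x<..y}"
    by (subst emeasure_density) auto
  finally have "(y - x) * ?c \<le> measure std_normal {x<..y}"
    by (simp add: std_normal.emeasure_eq_measure normal_density_nonneg ennreal_le_iff)
  then show ?thesis
    using False assms unfolding std_normal_cdf_eq_cdf by (simp add: std_normal.cdf_diff_eq)
qed simp

lemma std_normal_cdf_pos: "0 < std_normal_cdf x"
  using std_normal_cdf_increment_ge[of "x - 1" x] std_normal.cdf_nonneg[of "x - 1"]
    normal_density_pos[of 1 0 "max \<bar>x - 1\<bar> \<bar>x\<bar>"]
  by (simp add: std_normal_cdf_eq_cdf)

lemma std_normal_cdf_less_1: "std_normal_cdf x < 1"
  using std_normal_cdf_increment_ge[of x "x + 1"] std_normal.cdf_bounded_prob[of "x + 1"]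
    normal_density_pos[of 1 0 "max \<bar>x\<bar> \<bar>x + 1\<bar>"]
  by (simp add: std_normal_cdf_eq_cdf)

lemma std_normal_upper_tail_ge: "0 \<le> t \<Longrightarrow> std_normal_density (t + 1) \<le> 1 - std_normal_cdf t"
  using std_normal_cdf_increment_ge[of t "t + 1"] std_normal.cdf_bounded_prob[of "t + 1"]
  by (simp add: std_normal_cdf_eq_cdf)

section \<open>Generalized inverses of continuous distribution functions\<close>

context
  fixes F :: "real \<Rightarrow> real"
  assumes continuous_F: "continuous_on UNIV F" and mono_F: "mono F"
    and F_at_bot: "(F \<longlongrightarrow> 0) at_bot" and F_at_top: "(F \<longlongrightarrow> 1) at_top"
begin

lemma gen_inv_le_iff:
  assumes "0 < u" "u < 1"
  shows "gen_inv F u \<le> y \<longleftrightarrow> u \<le> F y"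
proof -
  let ?S = "{y. u \<le> F y}"
  obtain y1 where "u < F y1"
    using order_tendstoD(1)[OF F_at_top \<open>u < 1\<close>] by (metis eventually_at_top_linorder order.refl)
  then have nonempty: "?S \<noteq> {}"
    using less_imp_le by blast
  obtain y0 where y0: "\<And>y. y \<le> y0 \<Longrightarrow> F y < u"
    using order_tendstoD(2)[OF F_at_bot \<open>0 < u\<close>] unfolding eventually_at_bot_linorder by blast
  have bdd: "bdd_below ?S"
  proof (rule bdd_belowI)
    fix x assume "x \<in> ?S"
    then show "y0 \<le> x" using y0[of x] by (cases "x \<le> y0") auto
  qed
  have "closed ?S"
    using continuous_F by (intro closed_Collect_le continuous_intros) auto
  then have "gen_inv F u \<in> ?S"
    unfolding gen_inv_def using nonempty bdd by (rule closed_contains_Inf[rotated -1])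
  moreover have "u \<le> F y \<Longrightarrow> gen_inv F u \<le> y"
    unfolding gen_inv_def using bdd by (intro cInf_lower) auto
  ultimately show ?thesis
    using mono_F by (auto dest: monoD intro: order.trans)
qed

lemma gen_inv_inverse:
  assumes "0 < u" "u < 1"
  shows "F (gen_inv F u) = u"
proof (rule antisym)
  have "(F \<longlongrightarrow> F (gen_inv F u)) (at_left (gen_inv F u))"
    using continuous_F by (auto simp: continuous_on_eq_continuous_at isCont_def intro: tendsto_mono[OF at_le])
  moreover have "\<forall>\<^sub>F y in at_left (gen_inv F u). F y \<le> u"
  proof (rule eventually_mono)
    show "\<forall>\<^sub>F y in at_left (gen_inv F u). y < gen_inv F u"
      by (simp add: eventually_at_filter)
    fix y assume "y < gen_inv F u"
    then show "F y \<le> u"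
      using gen_inv_le_iff[OF assms, of y] by simp
  qed
  ultimately show "F (gen_inv F u) \<le> u"
    by (rule tendsto_upperbound) simp
  show "u \<le> F (gen_inv F u)"
    using gen_inv_le_iff[OF assms, of "gen_inv F u"] by simp
qed

end

lemma cdf_rv_eq_cdf_distr:
  assumes "prob_space M" "V \<in> borel_measurable M"
  shows "cdf_rv M V = cdf (distr M borel V)"
  using assms by (auto simp: cdf_rv_def cdf_def measure_distr vimage_def Int_def conj_commute
      intro!: arg_cong2[where f=measure])

lemma cdf_rv_distribution_function:
  assumes "prob_space M" "V \<in> borel_measurable M"
  shows "mono (cdf_rv M V)" "(cdf_rv M V \<longlongrightarrow> 0) at_bot" "(cdf_rv M V \<longlongrightarrow> 1) at_top"
proof -
  interpret real_distribution "distr M borel V"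
    using assms by (simp add: prob_space.real_distribution_distr)
  show "mono (cdf_rv M V)" "(cdf_rv M V \<longlongrightarrow> 0) at_bot" "(cdf_rv M V \<longlongrightarrow> 1) at_top"
    unfolding cdf_rv_eq_cdf_distr[OF assms]
    using cdf_nondecreasing cdf_lim_at_bot cdf_lim_at_top_prob by (auto intro: monoI)
qed

lemma
  assumes "prob_space M" "V \<in> borel_measurable M" "continuous_on UNIV (cdf_rv M V)" "0 < u" "u < 1"
  shows gen_inv_cdf_rv_le_iff: "gen_inv (cdf_rv M V) u \<le> y \<longleftrightarrow> u \<le> cdf_rv M V y"
    and cdf_rv_gen_inv: "cdf_rv M V (gen_inv (cdf_rv M V) u) = u"
  using gen_inv_le_iff[OF assms(3) cdf_rv_distribution_function[OF assms(1,2)] assms(4,5)]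
    gen_inv_inverse[OF assms(3) cdf_rv_distribution_function[OF assms(1,2)] assms(4,5)]
  by auto

lemma continuous_on_std_normal_cdf: "continuous_on UNIV std_normal_cdf"
  by (simp add: continuous_at_imp_continuous_on isCont_std_normal_cdf)

lemma std_normal_cdf_gen_inv: "0 < p \<Longrightarrow> p < 1 \<Longrightarrow> std_normal_cdf (gen_inv std_normal_cdf p) = p"
  by (rule gen_inv_inverse[OF continuous_on_std_normal_cdf mono_std_normal_cdf std_normal_cdf_at_bot
        std_normal_cdf_at_top])

lemma filterlim_std_normal_quantile_at_left_1: "filterlim (gen_inv std_normal_cdf) at_top (at_left 1)"
  unfolding filterlim_at_top
proof
  fix z
  show "\<forall>\<^sub>F p in at_left 1. z \<le> gen_inv std_normal_cdf p"
    using eventually_at_left_real[OF std_normal_cdf_less_1[of z]]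
  proof (rule eventually_mono)
    fix p assume p: "p \<in> {std_normal_cdf z<..<1}"
    then have "\<not> gen_inv std_normal_cdf p \<le> z"
      using gen_inv_le_iff[OF continuous_on_std_normal_cdf mono_std_normal_cdf std_normal_cdf_at_bot
          std_normal_cdf_at_top, of p z] std_normal_cdf_pos[of z]
      by auto
    then show "z \<le> gen_inv std_normal_cdf p" by simp
  qed
qed

section \<open>Exponential tilting of centred Gaussian measures\<close>

abbreviation mvn_measure :: "real^'n^'n \<Rightarrow> (real^'n) measure" where
  "mvn_measure R \<equiv> density lborel (mvn_density R)"

lemma
  fixes A :: "real^'n^'n"
  assumes "invertible A"
  shows matrix_vector_mul_matrix_inv: "A *v (matrix_inv A *v x) = x"
    and matrix_inv_matrix_vector_mul: "matrix_inv A *v (A *v x) = x"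
proof -
  obtain A' :: "real^'n^'n" where "A ** A' = mat 1 \<and> A' ** A = mat 1"
    using assms unfolding invertible_def by blast
  then have "A ** matrix_inv A = mat 1 \<and> matrix_inv A ** A = mat 1"
    unfolding matrix_inv_def by (rule someI)
  then show "A *v (matrix_inv A *v x) = x" "matrix_inv A *v (A *v x) = x"
    by (simp_all add: matrix_vector_mul_assoc)
qed

lemma inner_matrix_vector_mul_symmetric:
  fixes A :: "real^'n^'n"
  assumes "transpose A = A"
  shows "x \<bullet> (A *v y) = (A *v x) \<bullet> y"
  by (metis assms dot_lmul_matrix transpose_matrix_vector)

lemma correlation_matrix_inner_axis:
  fixes R :: "real^'n^'n"
  assumes corr: "correlation_matrix R" and inv: "invertible R"
  shows "axis k 1 \<bullet> (R *v axis k 1) = 1"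
    and "(matrix_inv R *v axis k 1) \<bullet> axis k 1 = matrix_inv R $ k $ k"
    and "(matrix_inv R *v axis k 1) \<bullet> (R *v axis k 1) = 1"
proof -
  have sym: "transpose R = R" and "R $ k $ k = 1"
    using corr by (auto simp: correlation_matrix_def)
  then show "axis k 1 \<bullet> (R *v axis k 1) = 1"
    by (simp add: inner_axis' matrix_vector_mult_basis column_def)
  show "(matrix_inv R *v axis k 1) \<bullet> axis k 1 = matrix_inv R $ k $ k"
    by (simp add: inner_axis matrix_vector_mult_basis column_def)
  show "(matrix_inv R *v axis k 1) \<bullet> (R *v axis k 1) = 1"
    by (simp add: inner_matrix_vector_mul_symmetric[OF sym] matrix_vector_mul_matrix_inv[OF inv] inner_axis)
qed

lemma matrix_inv_diag_ge_1:
  fixes R :: "real^'n^'n"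
  assumes corr: "correlation_matrix R" and inv: "invertible R"
  shows "1 \<le> matrix_inv R $ k $ k"
proof -
  let ?e = "axis k 1 :: real^'n"
  let ?u = "matrix_inv R *v ?e"
  have "0 \<le> (?u - ?e) \<bullet> (R *v (?u - ?e))"
    using corr by (simp add: correlation_matrix_def)
  then show ?thesis
    using correlation_matrix_inner_axis[OF corr inv, of k] matrix_vector_mul_matrix_inv[OF inv, of ?e]
    by (simp add: matrix_vector_mult_diff_distrib inner_diff_left inner_diff_right inner_commute inner_axis)
qed

lemma borel_measurable_mvn_density [measurable]: "mvn_density R \<in> borel_measurable borel"
  unfolding mvn_density_def
  by (intro borel_measurable_divide borel_measurable_continuous_onI continuous_intros borel_measurable_const)
    simp

text \<open>Cameron--Martin: the exponential tilt \<open>exp \<langle>l, w\<rangle>\<close> of \<open>N(0, R)\<close> is its translate by \<open>R l\<close>.\<close>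

lemma mvn_density_shift:
  fixes R :: "real^'n^'n"
  assumes sym: "transpose R = R" and inv: "invertible R"
  shows "mvn_density R (w + R *v l) * exp (l \<bullet> (w + R *v l)) = mvn_density R w * exp (l \<bullet> (R *v l) / 2)"
proof -
  let ?P = "matrix_inv R"
  have "?P *v (w + R *v l) = ?P *v w + l"
    by (simp add: matrix_vector_right_distrib matrix_inv_matrix_vector_mul[OF inv])
  moreover have "(R *v l) \<bullet> (?P *v w) = l \<bullet> w"
    by (simp add: inner_matrix_vector_mul_symmetric[OF sym, symmetric] matrix_vector_mul_matrix_inv[OF inv])
  ultimately have "(w + R *v l) \<bullet> (?P *v (w + R *v l)) = w \<bullet> (?P *v w) + 2 * (l \<bullet> w) + l \<bullet> (R *v l)"
    by (simp add: inner_add_left inner_add_right inner_commute)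
  then show ?thesis
    unfolding mvn_density_def by (simp add: inner_add_right field_simps flip: exp_add)
qed

lemma nn_integral_mvn_exp_shift_invariant:
  fixes R :: "real^'n^'n"
  assumes sym: "transpose R = R" and inv: "invertible R"
    and S: "S \<in> sets borel" and shift_S: "\<And>w. w + R *v l \<in> S \<longleftrightarrow> w \<in> S"
  shows "(\<integral>\<^sup>+w. indicator S w * ennreal (mvn_density R w) * ennreal (exp (l \<bullet> w)) \<partial>lborel)
     = ennreal (exp (l \<bullet> (R *v l) / 2)) * emeasure (mvn_measure R) S"
proof -
  let ?c = "R *v l"
  have "(\<integral>\<^sup>+w. indicator S w * ennreal (mvn_density R w) * ennreal (exp (l \<bullet> w)) \<partial>lborel)
     = (\<integral>\<^sup>+w. indicator S (?c + w) * ennreal (mvn_density R (?c + w)) * ennreal (exp (l \<bullet> (?c + w))) \<partial>lborel)"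
    using S by (subst lborel_distr_plus[of ?c, symmetric], subst nn_integral_distr) auto
  also have "\<dots> = (\<integral>\<^sup>+w. ennreal (exp (l \<bullet> ?c / 2)) * (ennreal (mvn_density R w) * indicator S w) \<partial>lborel)"
  proof (intro nn_integral_cong)
    fix w :: "real^'n"
    have "ennreal (mvn_density R (?c + w)) * ennreal (exp (l \<bullet> (?c + w)))
        = ennreal (exp (l \<bullet> ?c / 2)) * ennreal (mvn_density R w)"
      using mvn_density_shift[OF sym inv, of w l]
      by (simp add: ennreal_mult''[symmetric] add.commute mult.commute)
    then show "indicator S (?c + w) * ennreal (mvn_density R (?c + w)) * ennreal (exp (l \<bullet> (?c + w)))
       = ennreal (exp (l \<bullet> ?c / 2)) * (ennreal (mvn_density R w) * indicator S w)"
      using shift_S[of w] by (simp add: indicator_def add.commute mult_ac)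
  qed
  also have "\<dots> = ennreal (exp (l \<bullet> ?c / 2)) * emeasure (mvn_measure R) S"
    using S by (simp add: nn_integral_cmult emeasure_density)
  finally show ?thesis .
qed

lemma mvn_chernoff_bound:
  fixes R :: "real^'n^'n"
  assumes sym: "transpose R = R" and inv: "invertible R" and prob: "prob_space (mvn_measure R)"
    and S: "S \<in> sets borel" and shift_S: "\<And>w. w + R *v l \<in> S \<longleftrightarrow> w \<in> S"
  shows "measure (mvn_measure R) (S \<inter> {w. r < l \<bullet> w})
    \<le> exp (l \<bullet> (R *v l) / 2 - r) * measure (mvn_measure R) S"
proof -
  interpret N: prob_space "mvn_measure R" by (rule prob)
  have "emeasure (mvn_measure R) (S \<inter> {w. r < l \<bullet> w})
     = (\<integral>\<^sup>+w. ennreal (mvn_density R w) * indicator (S \<inter> {w. r < l \<bullet> w}) w \<partial>lborel)"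
    using S by (subst emeasure_density) auto
  also have "\<dots> \<le> (\<integral>\<^sup>+w. ennreal (exp (- r)) *
      (indicator S w * ennreal (mvn_density R w) * ennreal (exp (l \<bullet> w))) \<partial>lborel)"
  proof (intro nn_integral_mono)
    fix w :: "real^'n"
    have "ennreal (mvn_density R w) \<le> ennreal (mvn_density R w * (exp (- r) * exp (l \<bullet> w)))"
      if "r < l \<bullet> w"
      \<comment> \<open>the case split is needed because \<open>mvn_density R\<close> is negative when \<open>det R < 0\<close>\<close>
      using that by (cases "0 \<le> mvn_density R w")
        (auto intro!: ennreal_leI simp: ennreal_neg mult_le_cancel_left1 exp_add[symmetric])
    then show "ennreal (mvn_density R w) * indicator (S \<inter> {w. r < l \<bullet> w}) w
       \<le> ennreal (exp (- r)) * (indicator S w * ennreal (mvn_density R w) * ennreal (exp (l \<bullet> w)))"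
      by (auto simp: indicator_def ennreal_mult''[symmetric] mult_ac intro: ennreal_leI)
  qed
  also have "\<dots> = ennreal (exp (- r)) * (ennreal (exp (l \<bullet> (R *v l) / 2)) * emeasure (mvn_measure R) S)"
    using S by (simp add: nn_integral_cmult nn_integral_mvn_exp_shift_invariant[OF sym inv S shift_S])
  finally show ?thesis
    by (simp add: N.emeasure_eq_measure ennreal_mult''[symmetric] ennreal_le_iff mult.assoc[symmetric]
        flip: exp_add)
qed

text \<open>Tilting along \<open>R\<^sup>-\<^sup>1e\<^sub>k\<close> shifts the Gaussian along \<open>e\<^sub>k\<close> and therefore preserves \<open>S\<close>.\<close>

lemma mvn_tilt_inverse_axis:
  fixes R :: "real^'n^'n" and k :: 'n
  assumes corr: "correlation_matrix R" and inv: "invertible R" and prob: "prob_space (mvn_measure R)"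
    and S: "S \<in> sets borel" and shift_S: "\<And>w s. w + s *\<^sub>R axis k 1 \<in> S \<longleftrightarrow> w \<in> S"
    and t: "0 < t"
  defines "b \<equiv> 1 / matrix_inv R $ k $ k"
  shows "measure (mvn_measure R) (S \<inter> {w. t / 4 < (matrix_inv R *v axis k 1) \<bullet> w})
     \<le> exp (- b * t\<^sup>2 / 32) * measure (mvn_measure R) S"
proof -
  let ?u = "matrix_inv R *v axis k 1"
  define l where "l = (b * t / 4) *\<^sub>R ?u"
  have b: "0 < b"
    using matrix_inv_diag_ge_1[OF corr inv, of k] by (simp add: b_def)
  have Rl: "R *v l = (b * t / 4) *\<^sub>R axis k 1"
    by (simp add: l_def matrix_vector_mult_scaleR matrix_vector_mul_matrix_inv[OF inv])
  have sym: "transpose R = R"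
    using corr by (simp add: correlation_matrix_def)
  have "{w. t / 4 < ?u \<bullet> w} = {w. b * t\<^sup>2 / 16 < l \<bullet> w}"
    using b t by (auto simp: l_def power2_eq_square mult_less_cancel_left_pos)
  then have "measure (mvn_measure R) (S \<inter> {w. t / 4 < ?u \<bullet> w})
      = measure (mvn_measure R) (S \<inter> {w. b * t\<^sup>2 / 16 < l \<bullet> w})"
    by (simp only:)
  also have "\<dots> \<le> exp (l \<bullet> (R *v l) / 2 - b * t\<^sup>2 / 16) * measure (mvn_measure R) S"
    by (rule mvn_chernoff_bound[OF sym inv prob S]) (simp add: Rl shift_S)
  also have "l \<bullet> (R *v l) / 2 - b * t\<^sup>2 / 16 = - b * t\<^sup>2 / 32"
    using Rl correlation_matrix_inner_axis(2)[OF corr inv, of k] b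
    by (simp add: l_def b_def power2_eq_square field_simps)
  finally show ?thesis .
qed

text \<open>\<open>w\<^sub>k - b \<langle>R\<^sup>-\<^sup>1e\<^sub>k, w\<rangle>\<close> is the residual of \<open>w\<^sub>k\<close> after regression on \<open>\<langle>R\<^sup>-\<^sup>1e\<^sub>k, w\<rangle>\<close>;
  under \<open>N(0, R)\<close> it has variance \<open>1 - b\<close>.\<close>

lemma mvn_tail_regression_residual:
  fixes R :: "real^'n^'n" and k :: 'n
  assumes corr: "correlation_matrix R" and inv: "invertible R" and prob: "prob_space (mvn_measure R)"
    and t: "0 < t"
  defines "b \<equiv> 1 / matrix_inv R $ k $ k"
  shows "measure (mvn_measure R) {w. (1 - b / 4) * t < w $ k - b * ((matrix_inv R *v axis k 1) \<bullet> w)}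
     \<le> exp (- t\<^sup>2 / 2 - b * t\<^sup>2 / 4)"
proof -
  interpret N: prob_space "mvn_measure R" by (rule prob)
  let ?e = "axis k 1 :: real^'n"
  let ?u = "matrix_inv R *v ?e"
  define l where "l = t *\<^sub>R (?e - b *\<^sub>R ?u)"
  have b: "0 < b"
    using matrix_inv_diag_ge_1[OF corr inv, of k] by (simp add: b_def)
  have "(?e - b *\<^sub>R ?u) \<bullet> (R *v ?e - b *\<^sub>R ?e) = 1 - b"
    using correlation_matrix_inner_axis[OF corr inv, of k] b
    by (simp add: b_def inner_diff_left inner_diff_right inner_axis algebra_simps)
  then have variance: "l \<bullet> (R *v l) = t\<^sup>2 * (1 - b)"
    by (simp add: l_def matrix_vector_mult_scaleR matrix_vector_mult_diff_distrib
        matrix_vector_mul_matrix_inv[OF inv] power2_eq_square)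
  have "{w. (1 - b / 4) * t < w $ k - b * (?u \<bullet> w)} = UNIV \<inter> {w. (1 - b / 4) * t\<^sup>2 < l \<bullet> w}"
    using t by (auto simp: l_def inner_diff_left inner_axis' power2_eq_square mult.assoc)
  also have "measure (mvn_measure R) \<dots>
      \<le> exp (l \<bullet> (R *v l) / 2 - (1 - b / 4) * t\<^sup>2) * measure (mvn_measure R) UNIV"
    using corr by (intro mvn_chernoff_bound[OF _ inv prob]) (auto simp: correlation_matrix_def)
  also have "\<dots> = exp (- t\<^sup>2 / 2 - b * t\<^sup>2 / 4)"
    using N.prob_space by (simp add: variance field_simps)
  finally show ?thesis .
qed

lemma mvn_coordinate_tail_inter_le:
  fixes R :: "real^'n^'n" and k :: 'n
  assumes corr: "correlation_matrix R" and inv: "invertible R" and prob: "prob_space (mvn_measure R)"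
    and S: "S \<in> sets borel" and shift_S: "\<And>w s. w + s *\<^sub>R axis k 1 \<in> S \<longleftrightarrow> w \<in> S"
    and t: "0 < t"
  defines "b \<equiv> 1 / matrix_inv R $ k $ k"
  shows "measure (mvn_measure R) ({w. t < w $ k} \<inter> S)
     \<le> exp (- b * t\<^sup>2 / 32) * measure (mvn_measure R) S + exp (- t\<^sup>2 / 2 - b * t\<^sup>2 / 4)"
proof -
  interpret N: prob_space "mvn_measure R" by (rule prob)
  let ?u = "matrix_inv R *v axis k 1"
  let ?A = "S \<inter> {w. t / 4 < ?u \<bullet> w}" and ?B = "{w. (1 - b / 4) * t < w $ k - b * (?u \<bullet> w)}"
  have b: "0 < b"
    using matrix_inv_diag_ge_1[OF corr inv, of k] by (simp add: b_def)
  have "{w. t < w $ k} \<inter> S \<subseteq> ?A \<union> ?B"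
  proof
    fix w assume w: "w \<in> {w. t < w $ k} \<inter> S"
    show "w \<in> ?A \<union> ?B"
    proof (cases "t / 4 < ?u \<bullet> w")
      case False
      then have "b * (?u \<bullet> w) \<le> b * (t / 4)"
        using b by (intro mult_left_mono) auto
      with w show ?thesis
        by (simp add: algebra_simps)
    qed (use w in simp)
  qed
  moreover have "{w. t / 4 < ?u \<bullet> w} \<in> sets borel" "?B \<in> sets borel"
    by (intro borel_open open_Collect_less continuous_intros)+
  ultimately have "measure (mvn_measure R) ({w. t < w $ k} \<inter> S) \<le> measure (mvn_measure R) (?A \<union> ?B)"
    using S by (intro N.finite_measure_mono) auto
  also have "\<dots> \<le> measure (mvn_measure R) ?A + measure (mvn_measure R) ?B"
    using S \<open>?B \<in> sets borel\<close> \<open>{w. t / 4 < ?u \<bullet> w} \<in> sets borel\<close> by (intro measure_Un_le) auto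
  finally show ?thesis
    using mvn_tilt_inverse_axis[OF corr inv prob S shift_S t]
      mvn_tail_regression_residual[OF corr inv prob t, where k=k]
    unfolding b_def by linarith
qed

section \<open>Lower orthants in \<open>real^'n\<close>\<close>

lemma borel_measurable_vec_lambda:
  fixes f :: "'a \<Rightarrow> 'n::finite \<Rightarrow> real"
  assumes "\<And>j. (\<lambda>\<omega>. f \<omega> j) \<in> borel_measurable M"
  shows "(\<lambda>\<omega>. \<chi> j. f \<omega> j) \<in> borel_measurable M"
  using assms by (subst borel_measurable_euclidean_space) (auto simp: Basis_vec_def inner_axis)

lemma eventually_le_vec_of_nat: "\<forall>\<^sub>F k in sequentially. (z :: real^'n) \<le> (\<chi> j. real k)"
proof -
  have "\<forall>\<^sub>F k in sequentially. z $ j \<le> real k" for j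
  proof -
    obtain n :: nat where "z $ j \<le> real n"
      using real_arch_simple by blast
    then show ?thesis
      unfolding eventually_sequentially by (metis dual_order.trans of_nat_le_iff)
  qed
  then show ?thesis
    by (simp add: less_eq_vec_def eventually_all_finite)
qed

lemma (in prob_space) tendsto_prob_le_vec_of_nat:
  fixes Z :: "'a \<Rightarrow> real^'n"
  assumes "Z \<in> borel_measurable M"
  shows "(\<lambda>k. measure M {\<omega> \<in> space M. Z \<omega> \<le> (\<chi> j. real k)}) \<longlonglongrightarrow> 1"
proof -
  let ?A = "\<lambda>k. {\<omega> \<in> space M. Z \<omega> \<le> (\<chi> j. real k)}"
  have "(\<lambda>k. measure M (?A k)) \<longlonglongrightarrow> measure M (\<Union>k. ?A k)"
  proof (rule finite_Lim_measure_incseq)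
    have "?A k = Z -` {..\<chi> j. real k} \<inter> space M" for k
      by auto
    then show "range ?A \<subseteq> sets M"
      using measurable_sets[OF assms] by auto
    show "incseq ?A"
      by (auto simp: incseq_def less_eq_vec_def intro: order.trans)
  qed
  moreover have "(\<Union>k. ?A k) = space M"
    using eventually_happens'[OF _ eventually_le_vec_of_nat] by auto
  ultimately show ?thesis
    using prob_space by simp
qed

lemma emeasure_space_eq_1_of_incseq:
  assumes "range C \<subseteq> sets N" "incseq C" "(\<Union>k. C k) = space N"
    and lim: "(\<lambda>k. measure N (C k)) \<longlonglongrightarrow> 1"
  shows "emeasure N (space N) = 1"
proof -
  have "(\<lambda>k. emeasure N (C k)) \<longlonglongrightarrow> emeasure N (space N)"
    using Lim_emeasure_incseq[OF assms(1,2)] assms(3) by simp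
  moreover have "\<forall>\<^sub>F k in sequentially. emeasure N (C k) = ennreal (measure N (C k))"
    using order_tendstoD(1)[OF lim zero_less_one]
    by (rule eventually_mono) (metis emeasure_eq_ennreal_measure measure_zero_top less_irrefl)
  then have "(\<lambda>k. emeasure N (C k)) \<longlonglongrightarrow> 1"
    using tendsto_ennrealI[OF lim] by (simp add: tendsto_cong)
  ultimately show ?thesis
    using LIMSEQ_unique by blast
qed

lemma measure_eqI_atMost_vec:
  fixes M N :: "(real^'n) measure"
  assumes sets_M: "sets M = sets borel" and sets_N: "sets N = sets borel" and "finite_measure M"
    and eq: "\<And>x. emeasure M {..x} = emeasure N {..x}"
  shows "M = N"
proof (rule measure_eqI_generator_eq[where E="range atMost" and \<Omega>=UNIV and A="\<lambda>k. {..\<chi> j. real k}"])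
  show "Int_stable (range atMost :: (real^'n) set set)"
  proof (rule Int_stableI)
    fix a b :: "(real^'n) set" assume "a \<in> range atMost" "b \<in> range atMost"
    then obtain x y where "a = {..x}" "b = {..y}" by auto
    then have "a \<inter> b = {..inf x y}" by auto
    then show "a \<inter> b \<in> range atMost" by auto
  qed
  show "sets M = sigma_sets UNIV (range atMost)" "sets N = sigma_sets UNIV (range atMost)"
    using sets_M sets_N by (simp_all add: borel_eq_atMost sets_measure_of)
  show "(\<Union>k. {..\<chi> j. real k}) = (UNIV :: (real^'n) set)"
    using eventually_happens'[OF _ eventually_le_vec_of_nat] by auto
  show "emeasure M {..\<chi> j. real k} \<noteq> \<infinity>" for k
    using \<open>finite_measure M\<close> by (simp add: finite_measure.emeasure_finite)
qed (auto simp: eq)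

section \<open>Bounds on the optimal extremal precision\<close>

lemma class_C_memI:
  assumes "prob_space M" "X \<in> borel_measurable M" "g \<in> borel_measurable borel"
    and "continuous_on UNIV (cdf_rv M (\<lambda>\<omega>. g (X \<omega>)))" "0 < p" "p < 1"
  shows "g \<in> class_C M X p"
proof -
  interpret prob_space M by fact
  let ?V = "\<lambda>\<omega>. g (X \<omega>)"
  let ?c = "gen_inv (cdf_rv M ?V) p"
  have measurable_V: "?V \<in> borel_measurable M"
    using assms(2,3) by measurable
  have "{\<omega> \<in> space M. ?c < ?V \<omega>} = space M - {\<omega> \<in> space M. ?V \<omega> \<le> ?c}"
    by auto
  moreover have "{\<omega> \<in> space M. ?V \<omega> \<le> ?c} \<in> sets M"
    using measurable_V by measurable
  moreover have "cdf_rv M ?V ?c = p"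
    using cdf_rv_gen_inv[OF assms(1) measurable_V assms(4-6)] .
  ultimately have "measure M {\<omega> \<in> space M. ?c < ?V \<omega>} = 1 - p"
    by (simp add: prob_compl cdf_rv_def)
  then show ?thesis
    using assms(3) by (simp add: class_C_def)
qed

lemma lambda_opt_nonnegI:
  assumes "\<forall>\<^sub>F p in at_left 1. class_C M X p \<noteq> {}"
  shows "0 \<le> lambda_opt M Y X"
  unfolding lambda_opt_def
proof (rule le_Limsup)
  show "\<forall>\<^sub>F p in at_left 1. 0 \<le> (SUP g \<in> class_C M X p. ereal (cond_prob M
      {\<omega> \<in> space M. Y \<omega> > gen_inv (cdf_rv M Y) p}
      {\<omega> \<in> space M. g (X \<omega>) > gen_inv (cdf_rv M (\<lambda>\<omega>. g (X \<omega>))) p}))"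
    using assms by (rule eventually_mono) (auto simp: cond_prob_def intro: SUP_upper2)
qed simp

lemma lambda_opt_nonposI:
  assumes "\<forall>\<^sub>F p in at_left 1. \<forall>g \<in> class_C M X p. cond_prob M
      {\<omega> \<in> space M. Y \<omega> > gen_inv (cdf_rv M Y) p}
      {\<omega> \<in> space M. g (X \<omega>) > gen_inv (cdf_rv M (\<lambda>\<omega>. g (X \<omega>))) p} \<le> h p"
    and "(h \<longlongrightarrow> 0) (at_left 1)"
  shows "lambda_opt M Y X \<le> 0"
proof -
  have "lambda_opt M Y X \<le> Limsup (at_left 1) (\<lambda>p. ereal (h p))"
    unfolding lambda_opt_def using assms(1)
    by (intro Limsup_mono) (auto elim!: eventually_mono intro: SUP_least)
  also have "\<dots> = 0"
    using assms(2) by (intro lim_imp_Limsup) (auto simp: zero_ereal_def)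
  finally show ?thesis .
qed

section \<open>Random vectors with a Gaussian copula\<close>

locale gaussian_copula_model = prob_space M
  for M :: "'a measure" +
  fixes Y :: "'a \<Rightarrow> real" and X :: "'a \<Rightarrow> real^'d" and R :: "real^('d option)^('d option)"
  assumes measurable_Y [measurable]: "Y \<in> borel_measurable M"
    and measurable_X [measurable]: "X \<in> borel_measurable M"
    and continuous_cdf_Y: "continuous_on UNIV (cdf_rv M Y)"
    and continuous_cdf_X: "\<And>i. continuous_on UNIV (cdf_rv M (\<lambda>\<omega>. X \<omega> $ i))"
    and gaussian_copula: "has_gaussian_copula M Y X R"
begin

definition joint :: "'a \<Rightarrow> real^('d option)" where
  "joint \<omega> = (\<chi> j. case j of None \<Rightarrow> Y \<omega> | Some i \<Rightarrow> X \<omega> $ i)"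

definition marginal_cdf :: "'d option \<Rightarrow> real \<Rightarrow> real" where
  "marginal_cdf j = cdf_rv M (\<lambda>\<omega>. joint \<omega> $ j)"

text \<open>If \<open>W \<sim> N(0, R)\<close>, then \<open>quantile_transform W\<close> has the law of \<open>joint\<close>: this is how the
  copula hypothesis enters.\<close>

definition quantile_transform :: "real^('d option) \<Rightarrow> real^('d option)" where
  "quantile_transform w = (\<chi> j. gen_inv (marginal_cdf j) (std_normal_cdf (w $ j)))"

lemma joint_nth [simp]: "joint \<omega> $ None = Y \<omega>" "joint \<omega> $ Some i = X \<omega> $ i"
  by (simp_all add: joint_def)

lemma measurable_joint_nth: "(\<lambda>\<omega>. joint \<omega> $ j) \<in> borel_measurable M"
  by (cases j) (auto simp: joint_def intro: measurable_compose[OF measurable_X borel_measurable_nth])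

lemma measurable_joint [measurable]: "joint \<in> borel_measurable M"
  using borel_measurable_vec_lambda[of "\<lambda>\<omega> j. joint \<omega> $ j"] measurable_joint_nth by simp

lemma continuous_marginal_cdf: "continuous_on UNIV (marginal_cdf j)"
  using continuous_cdf_Y continuous_cdf_X by (cases j) (simp_all add: marginal_cdf_def joint_def)

lemma gen_inv_marginal_cdf_le_iff:
  "0 < u \<Longrightarrow> u < 1 \<Longrightarrow> gen_inv (marginal_cdf j) u \<le> y \<longleftrightarrow> u \<le> marginal_cdf j y"
  using gen_inv_cdf_rv_le_iff[OF prob_space_axioms measurable_joint_nth
      continuous_marginal_cdf[unfolded marginal_cdf_def]]
  by (simp add: marginal_cdf_def)

lemma marginal_cdf_gen_inv: "0 < u \<Longrightarrow> u < 1 \<Longrightarrow> marginal_cdf j (gen_inv (marginal_cdf j) u) = u"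
  using cdf_rv_gen_inv[OF prob_space_axioms measurable_joint_nth
      continuous_marginal_cdf[unfolded marginal_cdf_def]]
  by (simp add: marginal_cdf_def)

lemma quantile_transform_le_iff:
  "quantile_transform w \<le> a \<longleftrightarrow> (\<forall>j. std_normal_cdf (w $ j) \<le> marginal_cdf j (a $ j))"
  by (simp add: less_eq_vec_def quantile_transform_def gen_inv_marginal_cdf_le_iff
      std_normal_cdf_pos std_normal_cdf_less_1)

lemma mono_quantile_transform_nth: "mono (\<lambda>x. gen_inv (marginal_cdf j) (std_normal_cdf x))"
proof (rule monoI)
  fix x y :: real assume "x \<le> y"
  have "std_normal_cdf x \<le> marginal_cdf j (gen_inv (marginal_cdf j) (std_normal_cdf y))"
    using std_normal_cdf_mono[OF \<open>x \<le> y\<close>]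
    by (simp add: marginal_cdf_gen_inv std_normal_cdf_pos std_normal_cdf_less_1)
  then show "gen_inv (marginal_cdf j) (std_normal_cdf x) \<le> gen_inv (marginal_cdf j) (std_normal_cdf y)"
    by (simp add: gen_inv_marginal_cdf_le_iff std_normal_cdf_pos std_normal_cdf_less_1)
qed

lemma measurable_quantile_transform [measurable]: "quantile_transform \<in> borel_measurable borel"
  unfolding quantile_transform_def
proof (rule borel_measurable_vec_lambda)
  fix j
  show "(\<lambda>w::real^('d option). gen_inv (marginal_cdf j) (std_normal_cdf (w $ j))) \<in> borel_measurable borel"
    using measurable_compose[OF borel_measurable_nth[of j]
        borel_measurable_mono[OF mono_quantile_transform_nth]]
    by (simp add: o_def)
qed

lemma prob_joint_le:
  "measure M {\<omega> \<in> space M. joint \<omega> \<le> a} = measure (mvn_measure R) {w. quantile_transform w \<le> a}"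
proof -
  have "{\<omega> \<in> space M. joint \<omega> \<le> a} =
      {\<omega> \<in> space M. Y \<omega> \<le> a $ None \<and> (\<forall>i. X \<omega> $ i \<le> (\<chi> i. a $ Some i) $ i)}"
    by (auto simp: less_eq_vec_def joint_def split: option.splits)
  also have "measure M \<dots> = gaussian_copula R (\<chi> j. case j of None \<Rightarrow> cdf_rv M Y (a $ None)
      | Some i \<Rightarrow> cdf_rv M (\<lambda>\<omega>. X \<omega> $ i) ((\<chi> i. a $ Some i) $ i))"
    using gaussian_copula unfolding has_gaussian_copula_def by blast
  also have "(\<chi> j. case j of None \<Rightarrow> cdf_rv M Y (a $ None)
      | Some i \<Rightarrow> cdf_rv M (\<lambda>\<omega>. X \<omega> $ i) ((\<chi> i. a $ Some i) $ i)) = (\<chi> j. marginal_cdf j (a $ j))"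
    by (auto simp: vec_eq_iff marginal_cdf_def joint_def split: option.splits)
  finally show ?thesis
    by (simp add: gaussian_copula_def quantile_transform_le_iff)
qed

text \<open>The total mass of \<open>mvn_density R\<close> is not computed: the copula hypothesis forces it,
  because the orthant probabilities of \<open>joint\<close> tend to \<open>1\<close>.\<close>

lemma prob_space_mvn: "prob_space (mvn_measure R)"
proof
  let ?C = "\<lambda>k. {w. quantile_transform w \<le> (\<chi> j. real k)}"
  have "emeasure (mvn_measure R) (space (mvn_measure R)) = 1"
  proof (rule emeasure_space_eq_1_of_incseq)
    have "?C k = quantile_transform -` {..\<chi> j. real k} \<inter> space borel" for k
      by auto
    then show "range ?C \<subseteq> sets (mvn_measure R)"
      using measurable_sets[OF measurable_quantile_transform] by auto
    show "incseq ?C"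
      by (auto simp: incseq_def less_eq_vec_def intro: order.trans)
    show "(\<Union>k. ?C k) = space (mvn_measure R)"
      using eventually_happens'[OF _ eventually_le_vec_of_nat] by auto
    show "(\<lambda>k. measure (mvn_measure R) (?C k)) \<longlonglongrightarrow> 1"
      using tendsto_prob_le_vec_of_nat[OF measurable_joint] by (simp add: prob_joint_le)
  qed
  then show "emeasure (mvn_measure R) (space (mvn_measure R)) = 1" .
qed

lemma distr_joint_eq: "distr M borel joint = distr (mvn_measure R) borel quantile_transform"
proof (rule measure_eqI_atMost_vec)
  interpret N: prob_space "mvn_measure R" by (rule prob_space_mvn)
  show "finite_measure (distr M borel joint)"
    by (simp add: finite_measure_distr finite_measure_axioms)
  fix x
  have "emeasure (distr M borel joint) {..x} = ennreal (measure M {\<omega> \<in> space M. joint \<omega> \<le> x})"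
    by (simp add: emeasure_distr emeasure_eq_measure vimage_def Int_def conj_commute)
  also have "\<dots> = emeasure (distr (mvn_measure R) borel quantile_transform) {..x}"
    by (simp add: prob_joint_le emeasure_distr N.emeasure_eq_measure vimage_def)
  finally show "emeasure (distr M borel joint) {..x}
      = emeasure (distr (mvn_measure R) borel quantile_transform) {..x}" .
qed simp_all

lemma prob_joint_in:
  assumes "D \<in> sets borel"
  shows "measure M {\<omega> \<in> space M. joint \<omega> \<in> D} = measure (mvn_measure R) {w. quantile_transform w \<in> D}"
proof -
  have "measure M {\<omega> \<in> space M. joint \<omega> \<in> D} = measure (distr M borel joint) D"
    using assms by (simp add: measure_distr vimage_def Int_def conj_commute)
  also have "\<dots> = measure (mvn_measure R) {w. quantile_transform w \<in> D}"
    using assms by (simp add: distr_joint_eq measure_distr vimage_def)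
  finally show ?thesis .
qed

lemma quantile_transform_upper_tail:
  assumes "gen_inv (marginal_cdf j) (std_normal_cdf t) < quantile_transform w $ j"
  shows "t < w $ j"
proof (rule ccontr)
  assume "\<not> t < w $ j"
  then have "quantile_transform w $ j \<le> gen_inv (marginal_cdf j) (std_normal_cdf t)"
    using monoD[OF mono_quantile_transform_nth[of j], of "w $ j" t] by (simp add: quantile_transform_def)
  with assms show False by simp
qed

lemma prob_upper_tail_inter_le:
  assumes corr: "correlation_matrix R" and inv: "invertible R" and t: "0 < t" and E: "E \<in> sets borel"
  defines "b \<equiv> 1 / matrix_inv R $ None $ None"
  shows "measure M {\<omega> \<in> space M. gen_inv (cdf_rv M Y) (std_normal_cdf t) < Y \<omega> \<and> X \<omega> \<in> E}
     \<le> exp (- b * t\<^sup>2 / 32) * measure M {\<omega> \<in> space M. X \<omega> \<in> E} + exp (- t\<^sup>2 / 2 - b * t\<^sup>2 / 4)"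
proof -
  interpret N: prob_space "mvn_measure R" by (rule prob_space_mvn)
  let ?y = "gen_inv (cdf_rv M Y) (std_normal_cdf t)"
  define proj :: "real^('d option) \<Rightarrow> real^'d" where "proj z = (\<chi> i. z $ Some i)" for z
  have proj_joint: "proj (joint \<omega>) = X \<omega>" for \<omega>
    by (simp add: proj_def joint_def vec_eq_iff)
  have "proj \<in> borel_measurable borel"
    unfolding proj_def by (intro borel_measurable_vec_lambda borel_measurable_nth)
  from measurable_sets[OF this E] have DE: "proj -` E \<in> sets borel"
    by simp
  define S where "S = quantile_transform -` proj -` E"
  have S: "S \<in> sets borel"
    using measurable_sets[OF measurable_quantile_transform DE] by (simp add: S_def)
  have "proj (quantile_transform (w + s *\<^sub>R axis None 1)) = proj (quantile_transform w)" for w s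
    by (simp add: proj_def quantile_transform_def vec_eq_iff axis_def)
  then have shift_S: "w + s *\<^sub>R axis None 1 \<in> S \<longleftrightarrow> w \<in> S" for w s
    by (simp add: S_def)
  have "measure M {\<omega> \<in> space M. ?y < Y \<omega> \<and> X \<omega> \<in> E}
      = measure M {\<omega> \<in> space M. joint \<omega> \<in> {z. ?y < z $ None} \<inter> proj -` E}"
    by (simp add: proj_joint)
  also have "\<dots> = measure (mvn_measure R) {w. quantile_transform w \<in> {z. ?y < z $ None} \<inter> proj -` E}"
    using DE by (intro prob_joint_in) auto
  also have "\<dots> \<le> measure (mvn_measure R) ({w. t < w $ None} \<inter> S)"
    using quantile_transform_upper_tail[of None t] S
    by (intro N.finite_measure_mono) (auto simp: S_def marginal_cdf_def)
  also have "\<dots> \<le> exp (- b * t\<^sup>2 / 32) * measure (mvn_measure R) S + exp (- t\<^sup>2 / 2 - b * t\<^sup>2 / 4)"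
    unfolding b_def by (rule mvn_coordinate_tail_inter_le[OF corr inv prob_space_mvn S shift_S t])
  also have "measure (mvn_measure R) S = measure M {\<omega> \<in> space M. X \<omega> \<in> E}"
    using prob_joint_in[OF DE] by (simp add: S_def proj_joint vimage_def)
  finally show ?thesis .
qed

lemma cond_prob_upper_tail_le:
  assumes corr: "correlation_matrix R" and inv: "invertible R" and t: "0 < t"
    and g: "g \<in> class_C M X (std_normal_cdf t)"
  defines "b \<equiv> 1 / matrix_inv R $ None $ None"
  shows "cond_prob M {\<omega> \<in> space M. Y \<omega> > gen_inv (cdf_rv M Y) (std_normal_cdf t)}
      {\<omega> \<in> space M. g (X \<omega>) > gen_inv (cdf_rv M (\<lambda>\<omega>. g (X \<omega>))) (std_normal_cdf t)}
    \<le> exp (- b * t\<^sup>2 / 32) + sqrt (2 * pi) * exp (- b * t\<^sup>2 / 4 + t + 1 / 2)"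
proof -
  let ?p = "std_normal_cdf t"
  define E where "E = {x. gen_inv (cdf_rv M (\<lambda>\<omega>. g (X \<omega>))) ?p < g x}"
  have "g \<in> borel_measurable borel" and prob_E: "measure M {\<omega> \<in> space M. X \<omega> \<in> E} = 1 - ?p"
    using g by (simp_all add: class_C_def E_def)
  then have E: "E \<in> sets borel"
    unfolding E_def by measurable
  have density_pos: "0 < std_normal_density (t + 1)"
    by (simp add: normal_density_pos)
  have p_gap: "std_normal_density (t + 1) \<le> 1 - ?p"
    using std_normal_upper_tail_ge t by simp
  have "cond_prob M {\<omega> \<in> space M. Y \<omega> > gen_inv (cdf_rv M Y) ?p}
      {\<omega> \<in> space M. g (X \<omega>) > gen_inv (cdf_rv M (\<lambda>\<omega>. g (X \<omega>))) ?p}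
      = measure M {\<omega> \<in> space M. gen_inv (cdf_rv M Y) ?p < Y \<omega> \<and> X \<omega> \<in> E} / (1 - ?p)"
    unfolding cond_prob_def prob_E[symmetric]
    by (rule arg_cong2[where f="(/)"]) (auto simp: E_def intro!: arg_cong[where f="measure M"])
  also have "\<dots> \<le> (exp (- b * t\<^sup>2 / 32) * (1 - ?p) + exp (- t\<^sup>2 / 2 - b * t\<^sup>2 / 4)) / (1 - ?p)"
    using prob_upper_tail_inter_le[OF corr inv t E] prob_E std_normal_cdf_less_1[of t]
    by (intro divide_right_mono) (simp_all add: b_def)
  also have "\<dots> = exp (- b * t\<^sup>2 / 32) + exp (- t\<^sup>2 / 2 - b * t\<^sup>2 / 4) / (1 - ?p)"
    using std_normal_cdf_less_1[of t] by (simp add: add_divide_distrib)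
  also have "\<dots> \<le> exp (- b * t\<^sup>2 / 32) + exp (- t\<^sup>2 / 2 - b * t\<^sup>2 / 4) / std_normal_density (t + 1)"
    using p_gap density_pos by (simp add: divide_left_mono)
  also have "exp (- t\<^sup>2 / 2 - b * t\<^sup>2 / 4) / std_normal_density (t + 1)
      = sqrt (2 * pi) * exp (- b * t\<^sup>2 / 4 + t + 1 / 2)"
  proof -
    have "- b * t\<^sup>2 / 4 + t + 1 / 2 = (- t\<^sup>2 / 2 - b * t\<^sup>2 / 4) - (- (t + 1)\<^sup>2 / 2)"
      by (simp add: power2_eq_square field_simps)
    then have "exp (- b * t\<^sup>2 / 4 + t + 1 / 2) = exp (- t\<^sup>2 / 2 - b * t\<^sup>2 / 4) / exp (- (t + 1)\<^sup>2 / 2)"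
      by (simp only: exp_diff)
    then show ?thesis
      by (simp add: std_normal_density_def)
  qed
  finally show ?thesis .
qed


lemma lambda_opt_nonpos:
  assumes corr: "correlation_matrix R" and inv: "invertible R"
  shows "lambda_opt M Y X \<le> 0"
proof -
  define b where "b = 1 / matrix_inv R $ None $ None"
  define H where "H t = exp (- b * t\<^sup>2 / 32) + sqrt (2 * pi) * exp (- b * t\<^sup>2 / 4 + t + 1 / 2)" for t
  have "0 < b"
    using matrix_inv_diag_ge_1[OF corr inv, of None] unfolding b_def by simp
  then have "(H \<longlongrightarrow> 0) at_top"
    unfolding H_def by real_asymp
  then have H_lim: "((\<lambda>p. H (gen_inv std_normal_cdf p)) \<longlongrightarrow> 0) (at_left 1)"
    using filterlim_compose filterlim_std_normal_quantile_at_left_1 by blast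
  have "\<forall>\<^sub>F p in at_left (1::real). p \<in> {0<..<1}"
    using eventually_at_left_real[of 0 1] by simp
  moreover have "\<forall>\<^sub>F p in at_left 1. 0 < gen_inv std_normal_cdf p"
    using filterlim_std_normal_quantile_at_left_1 by (simp add: filterlim_at_top_dense)
  ultimately have "\<forall>\<^sub>F p in at_left 1. \<forall>g \<in> class_C M X p. cond_prob M
      {\<omega> \<in> space M. Y \<omega> > gen_inv (cdf_rv M Y) p}
      {\<omega> \<in> space M. g (X \<omega>) > gen_inv (cdf_rv M (\<lambda>\<omega>. g (X \<omega>))) p} \<le> H (gen_inv std_normal_cdf p)"
  proof eventually_elim
    case (elim p)
    then have "std_normal_cdf (gen_inv std_normal_cdf p) = p"
      by (simp add: std_normal_cdf_gen_inv)
    then show ?case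
      using cond_prob_upper_tail_le[OF corr inv, of "gen_inv std_normal_cdf p"] elim
      by (simp add: H_def b_def)
  qed
  then show ?thesis
    using H_lim by (rule lambda_opt_nonposI)
qed

lemma lambda_opt_nonneg: "0 \<le> lambda_opt M Y X"
proof (rule lambda_opt_nonnegI)
  have "(\<lambda>x. x $ i) \<in> class_C M X p" if "p \<in> {0<..<1}" for p i
    using class_C_memI[OF prob_space_axioms measurable_X borel_measurable_nth continuous_cdf_X] that
    by simp
  then show "\<forall>\<^sub>F p in at_left 1. class_C M X p \<noteq> {}"
    using eventually_at_left_real[of 0 1] by (auto elim!: eventually_mono)
qed

end

theorem corollary2:
  fixes M :: "'a measure" and Y :: "'a \<Rightarrow> real" and X :: "'a \<Rightarrow> real ^'d"
    and R :: "real ^('d option) ^('d option)"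
  assumes "prob_space M"
    and "Y \<in> borel_measurable M" and "X \<in> borel_measurable M"
    and "continuous_on UNIV (cdf_rv M Y)"
    and "\<And>i. continuous_on UNIV (cdf_rv M (\<lambda>\<omega>. X \<omega> $ i))"
    and "correlation_matrix R" and "invertible R"
    and "has_gaussian_copula M Y X R"
  shows "lambda_opt M Y X = 0"
proof -
  interpret gaussian_copula_model M Y X R
    using assms by (simp add: gaussian_copula_model_def gaussian_copula_model_axioms_def)
  show ?thesis
    using lambda_opt_nonneg lambda_opt_nonpos[OF assms(6,7)] by simp
qed

end
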